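(* Let $A,B\in\mathbb{Z}$ with $-1\leq A\leq B$, $B\geq 2$ and $2A<B+3$. Let $\mathcal{S}$ be the neighbor set of $T$ and $\mathcal{S}^{\ell}$ the neighbor set of $T^{\ell}$. Then $\mathcal{S}\subset\mathcal{S}^{\ell}\cup\{c\}\cup\mathcal{S}^{\ell}c$, where $\mathcal{S}^{\ell}c=\{s\circ c: s\in\mathcal{S}^{\ell}\}$.
   Context: Let $a(x,y)=(x+1,y)$, $b(x,y)=(x,y+1)$, $c(x,y)=(-x,-y)$ and let $\Gamma=\{a^pb^qc^r: p,q\in\mathbb{Z},\ r\in\{0,1\}\}$ (products are compositions). Let $M=\begin{pmatrix}0&-B\\1&-A\end{pmatrix}$, $g(\mathbf{x})=M\mathbf{x}+\left(\frac{B-1}{2},0\right)^T$, $\mathcal{D}=\{id,a,\dots,a^{B-2},c\}$ if $B\geq3$ and $\mathcal{D}=\{id,c\}$ if $B=2$, and let $T$ be the unique nonempty compact set with $g(T)=\bigcup_{\delta\in\mathcal{D}}\delta(T)$. Let $T^{\ell}$ be the unique nonempty compact set with $MT^{\ell}=\bigcup_{k=0}^{B-1}\left(T^{\ell}+(k,0)^T\right)$. The neighbor set of $T$ is $\mathcal{S}=\{\gamma\in\Gamma\setminus\{id\}: T\cap\gamma(T)\neq\emptyset\}$; the neighbor set of $T^{\ell}$ is $\mathcal{S}^{\ell}=\{a^pb^q\neq id: T^{\ell}\cap a^pb^q(T^{\ell})\neq\emptyset\}$ (translations by nonzero integer vectors $(p,q)$). *)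

theory Defs
  imports "HOL-Analysis.Analysis"
begin

type_synonym pt = "real \<times> real"

definition amap :: "pt \<Rightarrow> pt" where "amap = (\<lambda>(x, y). (x + 1, y))"
definition bmap :: "pt \<Rightarrow> pt" where "bmap = (\<lambda>(x, y). (x, y + 1))"
definition cmap :: "pt \<Rightarrow> pt" where "cmap = (\<lambda>(x, y). (- x, - y))"

text \<open>The element a^p b^q c^r of Gamma (composition, c^r applied first).\<close>
definition gam :: "int \<Rightarrow> int \<Rightarrow> nat \<Rightarrow> pt \<Rightarrow> pt" where
  "gam p q r = (\<lambda>(x, y). if r = 0 then (x + of_int p, y + of_int q)
                                   else (- x + of_int p, - y + of_int q))"

definition Gamma :: "(pt \<Rightarrow> pt) set" where
  "Gamma = {gam p q r | p q r. r \<in> {0, 1}}"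

definition Mmul :: "int \<Rightarrow> int \<Rightarrow> pt \<Rightarrow> pt" where
  "Mmul A B = (\<lambda>(x1, x2). (- of_int B * x2, x1 - of_int A * x2))"

definition gmap :: "int \<Rightarrow> int \<Rightarrow> pt \<Rightarrow> pt" where
  "gmap A B = (\<lambda>v. Mmul A B v + ((of_int B - 1) / 2, 0))"

definition Dset :: "int \<Rightarrow> (pt \<Rightarrow> pt) set" where
  "Dset B = (if B \<ge> 3 then {gam k 0 0 | k. 0 \<le> k \<and> k \<le> B - 2} \<union> {cmap}
             else {id, cmap})"

definition Tset :: "int \<Rightarrow> int \<Rightarrow> pt set" where
  "Tset A B = (THE T. T \<noteq> {} \<and> compact T \<and>
                 gmap A B ` T = (\<Union>\<delta>\<in>Dset B. \<delta> ` T))"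

definition Tl :: "int \<Rightarrow> int \<Rightarrow> pt set" where
  "Tl A B = (THE T. T \<noteq> {} \<and> compact T \<and>
                 Mmul A B ` T = (\<Union>k\<in>{0..B-1}. (\<lambda>v. v + (of_int k, 0)) ` T))"

definition nbr :: "int \<Rightarrow> int \<Rightarrow> (pt \<Rightarrow> pt) set" where
  "nbr A B = {\<gamma> \<in> Gamma - {id}. Tset A B \<inter> \<gamma> ` Tset A B \<noteq> {}}"

definition nbr_l :: "int \<Rightarrow> int \<Rightarrow> (pt \<Rightarrow> pt) set" where
  "nbr_l A B = {gam p q 0 | p q. gam p q 0 \<noteq> id \<and> Tl A B \<inter> gam p q 0 ` Tl A B \<noteq> {}}"

end

theory Submission
  imports Defs
begin

(* The matrix M is expanding: for the quadratic form qform one has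
   qform (M y) >= qform y + |y|^2, so M^-1 contracts the norm sqrt qform.  Hence T and T^l are the
   unique attractors of iterated function systems made of M^-1 composed with isometries, and every
   nonempty compact solution of the set equation of T^l equals T^l.
   Since g(-x) = (B-1, 0) - g(x), the symmetrization T u -T satisfies
   g(T u -T) = U_{k=0}^{B-1} ((T u -T) + (k, 0)); translating by the fixed point v of g turns this
   into the equation of T^l, so T^l = (T u -T) - v.  A neighbour a^p b^q c^r of T yields x, y in T
   with x = a^p b^q (+-y); both x and +-y lie in T u -T, so a^p b^q is a neighbour of T^l, unless it
   is the identity and the neighbour is c itself. *)

locale contracting_ifs =
  fixes N :: "'a :: {real_normed_vector, heine_borel} \<Rightarrow> real" and c :: real
    and I :: "'i set" and f :: "'i \<Rightarrow> 'a \<Rightarrow> 'a" and l :: real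
  assumes N_continuous: "continuous_on UNIV N"
    and N_zero: "N 0 = 0"
    and N_triangle: "N (x + y) \<le> N x + N y"
    and N_coercive: "c * norm x \<le> N x"
    and c_pos: "0 < c"
    and finite_I: "finite I" and I_nonempty: "I \<noteq> {}"
    and f_continuous: "i \<in> I \<Longrightarrow> continuous_on UNIV (f i)"
    and f_inj: "i \<in> I \<Longrightarrow> inj (f i)"
    and f_contracting: "i \<in> I \<Longrightarrow> N (f i x - f i y) \<le> l * N (x - y)"
    and l_nonneg: "0 \<le> l" and l_less_1: "l < 1"
begin

abbreviation Hutchinson :: "'a set \<Rightarrow> 'a set" where
  "Hutchinson S \<equiv> \<Union>i\<in>I. f i ` S"

lemma N_nonneg: "0 \<le> N x"
  by (rule order_trans[OF _ N_coercive]) (simp add: c_pos less_imp_le)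

lemma N_eq_0_iff: "N x = 0 \<longleftrightarrow> x = 0"
  using N_coercive[of x] c_pos N_nonneg[of x] N_zero
  by (smt (verit) mult_le_0_iff norm_le_zero_iff)

lemma continuous_on_N_diff: "continuous_on S (\<lambda>t. N (x - t))"
  by (rule continuous_on_compose2[OF N_continuous]) (auto intro!: continuous_intros)

text \<open>Measure the distance from S to T by the sup over S of the N-distance to the nearest point
  of T; one step of the iteration shrinks it by the factor l, so it vanishes.\<close>
lemma invariant_compact_subset:
  assumes S: "compact S" "S \<noteq> {}" "S = Hutchinson S"
    and T: "compact T" "T \<noteq> {}" "T = Hutchinson T"
  shows "S \<subseteq> T"
proof -
  have "\<exists>t\<in>T. \<forall>t'\<in>T. N (x - t) \<le> N (x - t')" for x
    using continuous_attains_inf[OF T(1,2) continuous_on_N_diff] by blast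
  then obtain nearest where nearest: "\<And>x. nearest x \<in> T"
    "\<And>x t. t \<in> T \<Longrightarrow> N (x - nearest x) \<le> N (x - t)"
    by metis
  define h where "h x = N (x - nearest x)" for x
  obtain t0 where t0: "t0 \<in> T" using T(2) by blast
  have "bounded ((\<lambda>x. N (x - t0)) ` S)"
    using S(1) by (intro compact_imp_bounded compact_continuous_image continuous_on_compose2[OF N_continuous])
       (auto intro!: continuous_intros)
  then obtain C where C: "\<And>x. x \<in> S \<Longrightarrow> N (x - t0) \<le> C"
    unfolding bounded_iff by (metis abs_le_D1 imageI real_norm_def)
  have bdd: "bdd_above (h ` S)"
    unfolding h_def by (rule bdd_aboveI2) (use nearest(2)[OF t0] C in \<open>blast intro: order_trans\<close>)
  define D where "D = Sup (h ` S)"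
  have h_le_D: "h x \<le> D" if "x \<in> S" for x
    unfolding D_def using bdd that by (simp add: cSup_upper)
  have "h x \<le> l * D" if "x \<in> S" for x
  proof -
    from that S(3) obtain i s where i: "i \<in> I" "s \<in> S" "x = f i s" by blast
    have "f i (nearest s) \<in> T" using T(3) nearest(1) i(1) by blast
    hence "h x \<le> N (f i s - f i (nearest s))" unfolding h_def using nearest(2) i(3) by blast
    also have "\<dots> \<le> l * h s" unfolding h_def using f_contracting[OF i(1)] .
    also have "\<dots> \<le> l * D" using h_le_D[OF i(2)] l_nonneg by (simp add: mult_left_mono)
    finally show ?thesis .
  qed
  hence "D \<le> l * D" unfolding D_def using S(2) by (intro cSup_least) auto
  moreover obtain x0 where "x0 \<in> S" using S(2) by blast
  hence "0 \<le> D" using h_le_D[of x0] N_nonneg[of "x0 - nearest x0"] unfolding h_def by linarith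
  ultimately have "D = 0" using l_less_1 by (smt (verit) mult_less_cancel_right2)
  show ?thesis
  proof
    fix x assume "x \<in> S"
    hence "N (x - nearest x) = 0" using h_le_D N_nonneg \<open>D = 0\<close> unfolding h_def by (meson order.antisym)
    thus "x \<in> T" using nearest(1)[of x] by (simp add: N_eq_0_iff)
  qed
qed

lemma invariant_ball_exists: "\<exists>K. compact K \<and> K \<noteq> {} \<and> (\<forall>i\<in>I. f i ` K \<subseteq> K)"
proof -
  define E where "E = (\<Sum>i\<in>I. N (f i 0))"
  have E: "N (f i 0) \<le> E" if "i \<in> I" for i
    unfolding E_def using finite_I N_nonneg that by (intro member_le_sum) auto
  define R where "R = E / (1 - l)"
  have R_nonneg: "0 \<le> R"
    unfolding R_def E_def using N_nonneg l_less_1 by (simp add: sum_nonneg)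
  define K where "K = {x. N x \<le> R}"
  have "f i x \<in> K" if i: "i \<in> I" and x: "x \<in> K" for i x
  proof -
    have "N (f i x) \<le> N (f i x - f i 0) + N (f i 0)" using N_triangle[of "f i x - f i 0" "f i 0"] by simp
    also have "\<dots> \<le> l * R + E"
      using f_contracting[OF i, of x 0] E[OF i] x l_nonneg unfolding K_def
      by (smt (verit) diff_zero mem_Collect_eq mult_left_mono)
    also have "\<dots> = R" using l_less_1 unfolding R_def by (simp add: field_simps)
    finally show ?thesis unfolding K_def by simp
  qed
  moreover have "closed K" unfolding K_def by (rule closed_Collect_le[OF N_continuous]) auto
  moreover have "bounded K"
  proof -
    have "norm x \<le> R / c" if "N x \<le> R" for x
      using N_coercive[of x] that c_pos by (simp add: field_simps)
    thus ?thesis unfolding bounded_iff K_def by blast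
  qed
  moreover have "0 \<in> K" unfolding K_def using N_zero R_nonneg by simp
  ultimately show ?thesis by (auto simp: compact_eq_bounded_closed)
qed

text \<open>The attractor is the intersection of the iterates of an invariant compact set.  The
  injectivity of the maps is what makes it invariant rather than merely sub-invariant.\<close>
lemma attractor_exists: "\<exists>T. T \<noteq> {} \<and> compact T \<and> T = Hutchinson T"
proof -
  obtain K where K: "compact K" "K \<noteq> {}" "\<And>i. i \<in> I \<Longrightarrow> f i ` K \<subseteq> K"
    using invariant_ball_exists by blast
  define Kn where "Kn n = (Hutchinson ^^ n) K" for n
  have Kn_Suc: "Kn (Suc n) = Hutchinson (Kn n)" for n by (simp add: Kn_def)
  have Kn_compact: "compact (Kn n)" for n
  proof (induction n)
    case 0 thus ?case using K by (simp add: Kn_def)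
  next
    case (Suc n) thus ?case unfolding Kn_Suc
      using finite_I f_continuous
      by (intro compact_UN) (auto intro: compact_continuous_image continuous_on_subset)
  qed
  have Kn_nonempty: "Kn n \<noteq> {}" for n
    by (induction n) (use K(2) I_nonempty in \<open>simp_all add: Kn_def\<close>)
  have Kn_Suc_subset: "Kn (Suc n) \<subseteq> Kn n" for n
  proof (induction n)
    case 0 thus ?case using K by (auto simp: Kn_def)
  next
    case (Suc n) thus ?case unfolding Kn_Suc by blast
  qed
  have Kn_antimono: "m \<le> n \<Longrightarrow> Kn n \<subseteq> Kn m" for m n
    by (induction n rule: dec_induct) (use Kn_Suc_subset in auto)
  define T where "T = (\<Inter>n. Kn n)"
  have "Hutchinson T \<subseteq> Kn (Suc n)" for n
    unfolding Kn_Suc T_def by blast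
  hence "Hutchinson T \<subseteq> T"
    unfolding T_def using Kn_Suc_subset by (meson INT_greatest order_trans)
  moreover have "T \<subseteq> Hutchinson T"
  proof
    fix y assume y: "y \<in> T"
    hence "y \<in> Kn (Suc n)" for n unfolding T_def by blast
    hence "\<forall>n. \<exists>i\<in>I. y \<in> f i ` Kn n" unfolding Kn_Suc by blast
    hence "(\<Union>i\<in>I. {n. y \<in> f i ` Kn n}) = UNIV" by blast
    hence "\<not> (\<forall>i\<in>I. finite {n. y \<in> f i ` Kn n})"
      by (simp add: finite_UN[OF finite_I, symmetric])
    then obtain i where i: "i \<in> I" "infinite {n. y \<in> f i ` Kn n}" by blast
    have y_Kn: "y \<in> f i ` Kn m" for m
    proof -
      obtain n where "m \<le> n" "y \<in> f i ` Kn n"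
        using i(2) unfolding infinite_nat_iff_unbounded_le by blast
      thus ?thesis using Kn_antimono by blast
    qed
    then obtain x where x: "y = f i x" by blast
    have "x \<in> Kn m" for m
      using y_Kn[of m] f_inj[OF i(1)] x by (auto dest: injD)
    thus "y \<in> Hutchinson T" using x i(1) unfolding T_def by blast
  qed
  moreover have "T \<noteq> {}" unfolding T_def by (rule compact_nest[OF Kn_compact Kn_nonempty Kn_antimono])
  moreover have "compact T" unfolding T_def by (rule compact_Inter) (use Kn_compact in auto)
  ultimately show ?thesis by blast
qed

theorem attractor_ex1: "\<exists>!T. T \<noteq> {} \<and> compact T \<and> T = Hutchinson T"
  using attractor_exists invariant_compact_subset by (metis subset_antisym)

end

definition xshift :: "int \<Rightarrow> pt \<Rightarrow> pt" where
  "xshift k z = z + (of_int k, 0)"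

definition Mmul_inv :: "int \<Rightarrow> int \<Rightarrow> pt \<Rightarrow> pt" where
  "Mmul_inv A B z = (snd z - of_int A * fst z / of_int B, - fst z / of_int B)"

definition qform :: "int \<Rightarrow> int \<Rightarrow> pt \<Rightarrow> real" where
  "qform A B z = of_int B * (fst z)^2 - 2 * of_int A * fst z * snd z + (of_int B + 1) * (snd z)^2"

definition qnorm :: "int \<Rightarrow> int \<Rightarrow> pt \<Rightarrow> real" where
  "qnorm A B z = sqrt (qform A B z)"

definition qform_contraction :: "int \<Rightarrow> real" where
  "qform_contraction B = (2 * of_int B + 1) / (2 * of_int B + 2)"

definition gmap_fixpoint :: "int \<Rightarrow> int \<Rightarrow> pt" where
  "gmap_fixpoint A B = (let v = (of_int B - 1) / (2 * (1 + of_int A + of_int B)) in ((1 + of_int A) * v, v))"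

lemma image_eq_iff_eq_image_inverse:
  assumes "\<And>x. g (f x) = x" and "\<And>y. f (g y) = y"
  shows "f ` S = X \<longleftrightarrow> S = g ` X"
  using assms by (auto simp: image_image)

lemma UN_atLeastAtMost_split_last:
  assumes "2 \<le> B" shows "(\<Union>k\<in>{0..B-1}. F k) = (\<Union>k\<in>{0..B-2}. F k) \<union> F (B - 1 :: int)"
proof -
  have "{0..B-1} = insert (B - 1) {0..B-2}" using assms by auto
  thus ?thesis by auto
qed

lemma UN_atLeastAtMost_split_first_reflect:
  assumes "2 \<le> B" shows "(\<Union>k\<in>{0..B-1}. F k) = F 0 \<union> (\<Union>k\<in>{0..B-2}. F (B - 1 - k :: int))"
proof -
  have "{0..B-1} = insert 0 ((-) (B - 1) ` {0..B-2})" using assms by auto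
  thus ?thesis by (simp only: UN_insert image_image)
qed

lemma xshift_0: "xshift 0 = id"
  by (rule ext) (simp add: xshift_def zero_prod_def)

lemma xshift_diff: "xshift k x - xshift k y = x - y"
  by (simp add: xshift_def)

lemma cmap_eq_uminus: "cmap = uminus"
  by (rule ext, case_tac x) (simp add: cmap_def)

lemma gam_0_apply: "gam p q 0 z = z + (of_int p, of_int q)"
  by (cases z) (simp add: gam_def)

lemma gam_1: "gam p q 1 = gam p q 0 \<circ> cmap"
  by (rule ext, case_tac x) (simp add: gam_def cmap_def)

lemma Gamma_cases: "g \<in> Gamma \<Longrightarrow> \<exists>p q. g = gam p q 0 \<or> g = gam p q 0 \<circ> cmap"
  unfolding Gamma_def by (auto simp: gam_1[unfolded One_nat_def]; blast)

lemma Dset_eq: "2 \<le> B \<Longrightarrow> Dset B = xshift ` {0..B-2} \<union> {uminus}"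
proof -
  have "gam k 0 0 = xshift k" for k by (rule ext) (simp add: gam_0_apply xshift_def)
  moreover assume "2 \<le> B"
  moreover have "B = 2 \<Longrightarrow> {0..B-2} = {0}" by simp
  ultimately show ?thesis unfolding Dset_def by (cases "B = 2") (auto simp: xshift_0 cmap_eq_uminus)
qed

lemma Mmul_Mmul_inv: "B \<noteq> 0 \<Longrightarrow> Mmul A B (Mmul_inv A B z) = z"
  by (cases z) (simp add: Mmul_def Mmul_inv_def field_simps)

lemma Mmul_inv_Mmul: "B \<noteq> 0 \<Longrightarrow> Mmul_inv A B (Mmul A B z) = z"
  by (cases z) (simp add: Mmul_def Mmul_inv_def field_simps)

lemma Mmul_inv_diff: "Mmul_inv A B (x - y) = Mmul_inv A B x - Mmul_inv A B y"
  by (cases x, cases y) (simp add: Mmul_inv_def diff_divide_distrib algebra_simps)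

lemma continuous_on_Mmul_inv: "continuous_on UNIV (Mmul_inv A B)"
  unfolding Mmul_inv_def divide_inverse by (intro continuous_intros)

lemma gmap_uminus: "gmap A B (- x) = (of_int (B - 1), 0) - gmap A B x"
  by (cases x) (simp add: gmap_def Mmul_def field_simps)

lemma Mmul_diff_gmap_fixpoint:
  assumes "1 + A + B \<noteq> 0"
  shows "Mmul A B (x - gmap_fixpoint A B) = gmap A B x - gmap_fixpoint A B"
proof -
  define a b where "a = real_of_int A" and "b = real_of_int B"
  define v where "v = (b - 1) / (2 * (1 + a + b))"
  have "1 + a + b \<noteq> 0" using assms unfolding a_def b_def by linarith
  hence "(1 + a + b) * v = (b - 1) / 2" by (simp add: v_def field_simps)
  moreover have "gmap_fixpoint A B = ((1 + a) * v, v)" by (simp add: gmap_fixpoint_def a_def b_def v_def)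
  ultimately show ?thesis
    by (cases x) (auto simp: Mmul_def gmap_def a_def[symmetric] b_def[symmetric] algebra_simps)
qed

lemma norm_pt_sq: "(norm (z :: pt))^2 = (fst z)^2 + (snd z)^2"
  by (cases z) (simp add: norm_Pair)

lemma qform_uminus: "qform A B (- z) = qform A B z"
  by (simp add: qform_def)

lemma qnorm_uminus: "qnorm A B (- z) = qnorm A B z"
  by (simp add: qnorm_def qform_uminus)

lemma continuous_on_qnorm: "continuous_on UNIV (qnorm A B)"
  unfolding qnorm_def qform_def by (intro continuous_intros)

lemma gmap_image_symmetrization:
  assumes B: "2 \<le> B" and gmap_T: "gmap A B ` T = (\<Union>k\<in>{0..B-2}. xshift k ` T) \<union> uminus ` T"
  shows "gmap A B ` (T \<union> uminus ` T) = (\<Union>k\<in>{0..B-1}. xshift k ` (T \<union> uminus ` T))"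
proof -
  define r :: "pt \<Rightarrow> pt" where "r z = (of_int (B - 1), 0) - z" for z
  have "r (xshift k z) = xshift (B - 1 - k) (- z)" for k z
    by (simp add: r_def xshift_def)
  hence r_xshift: "r ` xshift k ` T = xshift (B - 1 - k) ` uminus ` T" for k
    by (simp add: image_image)
  have "r (- z) = xshift (B - 1) z" for z
    by (simp add: r_def xshift_def)
  hence r_uminus: "r ` uminus ` T = xshift (B - 1) ` T"
    by (simp add: image_image)
  have "gmap A B ` (T \<union> uminus ` T) = gmap A B ` T \<union> r ` gmap A B ` T"
    by (simp add: image_Un image_image gmap_uminus r_def)
  also have "\<dots> = ((\<Union>k\<in>{0..B-2}. xshift k ` T) \<union> xshift (B - 1) ` T)
      \<union> (uminus ` T \<union> (\<Union>k\<in>{0..B-2}. xshift (B - 1 - k) ` uminus ` T))"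
    by (auto simp: gmap_T image_Un image_UN r_xshift r_uminus)
  also have "\<dots> = (\<Union>k\<in>{0..B-1}. xshift k ` T) \<union> (\<Union>k\<in>{0..B-1}. xshift k ` uminus ` T)"
    unfolding UN_atLeastAtMost_split_last[OF B, of "\<lambda>k. xshift k ` T"]
      UN_atLeastAtMost_split_first_reflect[OF B, of "\<lambda>k. xshift k ` uminus ` T"]
    by (simp add: xshift_0)
  finally show ?thesis by (simp add: image_Un UN_Un_distrib)
qed

context
  fixes A B :: int
  assumes A_ge: "-1 \<le> A" and A_le: "A \<le> B" and B_ge: "2 \<le> B"
begin

lemma B_nonzero [simp]: "B \<noteq> 0"
  using B_ge by simp

lemma sq_A_le_sq_B: "(real_of_int A)^2 \<le> (real_of_int B)^2"
  using A_ge A_le B_ge by (intro power2_le_iff_abs_le[THEN iffD2]) linarith+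

lemma qform_ge: "(norm z)^2 / 3 \<le> qform A B z"
proof -
  define a b where "a = real_of_int A" and "b = real_of_int B"
  have b: "2 \<le> b" "a^2 \<le> b^2" using B_ge sq_A_le_sq_B by (simp_all add: a_def b_def)
  have "(b + 2/3) * (qform A B z - (norm z)^2 / 3) =
      ((b + 2/3) * snd z - a * fst z)^2 + ((b^2 - a^2) + (b/3 - 2/9)) * (fst z)^2"
    unfolding qform_def norm_pt_sq a_def b_def by (simp add: power2_eq_square field_simps)
  also have "\<dots> \<ge> 0" using b by (intro add_nonneg_nonneg mult_nonneg_nonneg) auto
  finally show ?thesis using b by (simp add: zero_le_mult_iff)
qed

lemma qform_le: "qform A B z \<le> (2 * of_int B + 1) * (norm z)^2"
proof -
  define a b u v where "a = real_of_int A" and "b = real_of_int B" and "u = fst z" and "v = snd z"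
  have ab: "-1 \<le> a" "a \<le> b" "2 \<le> b" using A_ge A_le B_ge by (simp_all add: a_def b_def)
  have "(2 * b + 1) * (norm z)^2 - qform A B z = (b + 1) * u^2 + 2 * a * u * v + b * v^2"
    unfolding qform_def norm_pt_sq a_def b_def u_def v_def by (simp add: power2_eq_square algebra_simps)
  also have "\<dots> \<ge> 0"
  proof (cases "0 \<le> a")
    case True
    have "(b + 1) * u^2 + 2 * a * u * v + b * v^2 = a * (u + v)^2 + (b + 1 - a) * u^2 + (b - a) * v^2"
      by (simp add: power2_eq_square algebra_simps)
    thus ?thesis using True ab by (simp add: add_nonneg_nonneg)
  next
    case False
    have "(b + 1) * u^2 + 2 * a * u * v + b * v^2 = - a * (u - v)^2 + (b + 1 + a) * u^2 + (b + a) * v^2"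
      by (simp add: power2_eq_square algebra_simps)
    moreover have "0 \<le> - a * (u - v)^2" "0 \<le> (b + 1 + a) * u^2" "0 \<le> (b + a) * v^2"
      using False ab by (simp_all add: mult_nonpos_nonneg)
    ultimately show ?thesis by linarith
  qed
  finally show ?thesis unfolding b_def by simp
qed

lemma qform_Mmul_ge: "qform A B y + (norm y)^2 \<le> qform A B (Mmul A B y)"
proof -
  define a b where "a = real_of_int A" and "b = real_of_int B"
  have b: "2 \<le> b" "a^2 \<le> b^2" using B_ge sq_A_le_sq_B by (simp_all add: a_def b_def)
  have "qform A B (Mmul A B y) - qform A B y - (norm y)^2
      = ((b^2 - a^2) * (b - 1) + (b - 2) * (b + 1)) * (snd y)^2"
    unfolding qform_def Mmul_def norm_pt_sq a_def b_def
    by (cases y) (simp add: power2_eq_square algebra_simps)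
  also have "\<dots> \<ge> 0" using b by (intro mult_nonneg_nonneg add_nonneg_nonneg) auto
  finally show ?thesis by simp
qed

lemma qform_Mmul_inv_le: "qform A B (Mmul_inv A B w) \<le> qform_contraction B * qform A B w"
proof -
  define y where "y = Mmul_inv A B w"
  define b where "b = real_of_int B"
  have w: "w = Mmul A B y" unfolding y_def by (simp add: Mmul_Mmul_inv)
  have b: "2 \<le> b" using B_ge by (simp add: b_def)
  have "(2 * b + 2) * qform A B y = (2 * b + 1) * qform A B y + qform A B y"
    by (simp add: algebra_simps)
  also have "\<dots> \<le> (2 * b + 1) * (qform A B y + (norm y)^2)"
    using qform_le[of y] by (simp add: b_def algebra_simps)
  also have "\<dots> \<le> (2 * b + 1) * qform A B w"
    using qform_Mmul_ge[of y] w b by (intro mult_left_mono) auto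
  finally show ?thesis using b unfolding qform_contraction_def y_def b_def[symmetric] by (simp add: field_simps)
qed

lemma qnorm_triangle: "qnorm A B (x + y) \<le> qnorm A B x + qnorm A B y"
proof -
  define a b where "a = real_of_int A" and "b = real_of_int B"
  define d where "d = b * (b + 1) - a^2"
  have b: "0 < b" "0 \<le> d"
    using B_ge sq_A_le_sq_B unfolding a_def b_def d_def by (simp_all add: power2_eq_square algebra_simps)
  define P where "P z = (sqrt b * fst z - a / sqrt b * snd z, sqrt (d / b) * snd z)" for z
  have "qform A B z = (norm (P z))^2" for z
    using b unfolding qform_def norm_pt_sq P_def d_def a_def b_def
    by (simp add: power_divide power_mult_distrib field_simps power2_eq_square)
  hence qnorm_P: "qnorm A B z = norm (P z)" for z by (simp add: qnorm_def)
  have "P (x + y) = P x + P y" by (simp add: P_def algebra_simps)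
  thus ?thesis unfolding qnorm_P by (simp add: norm_triangle_ineq)
qed

lemma qnorm_ge: "1/2 * norm z \<le> qnorm A B z"
proof -
  have "(1/2 * norm z)^2 = (norm z)^2 / 4" by (simp add: power2_eq_square)
  also have "\<dots> \<le> (norm z)^2 / 3" by simp
  also have "\<dots> \<le> qform A B z" by (rule qform_ge)
  finally show ?thesis unfolding qnorm_def by (rule real_le_rsqrt)
qed

lemma qnorm_eq_0_iff: "qnorm A B z = 0 \<longleftrightarrow> z = 0"
  using qnorm_ge[of z] by (auto simp: qnorm_def qform_def)

lemma qnorm_Mmul_inv_le: "qnorm A B (Mmul_inv A B w) \<le> sqrt (qform_contraction B) * qnorm A B w"
  unfolding qnorm_def real_sqrt_mult[symmetric] by (intro real_sqrt_le_mono qform_Mmul_inv_le)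

lemma qform_contraction_bounds: "0 \<le> qform_contraction B" "qform_contraction B < 1"
  using B_ge by (simp_all add: qform_contraction_def)

lemma contracting_ifs_Mmul_inv:
  assumes "finite I" "I \<noteq> {}" and continuous: "\<And>i. i \<in> I \<Longrightarrow> continuous_on UNIV (h i)"
    and isometry: "\<And>i x y. i \<in> I \<Longrightarrow> qnorm A B (h i x - h i y) = qnorm A B (x - y)"
  shows "contracting_ifs (qnorm A B) (1/2) I (\<lambda>i. Mmul_inv A B \<circ> h i) (sqrt (qform_contraction B))"
proof unfold_locales
  fix i assume i: "i \<in> I"
  show "continuous_on UNIV (Mmul_inv A B \<circ> h i)"
    by (rule continuous_on_compose[OF continuous[OF i]]) (use continuous_on_Mmul_inv continuous_on_subset in blast)
  have "inj (h i)"
    using isometry[OF i] by (intro injI) (metis qnorm_eq_0_iff right_minus_eq)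
  moreover have "inj (Mmul_inv A B)" using Mmul_Mmul_inv[OF B_nonzero] by (metis injI)
  ultimately show "inj (Mmul_inv A B \<circ> h i)" by (rule inj_compose[rotated])
  fix x y
  show "qnorm A B ((Mmul_inv A B \<circ> h i) x - (Mmul_inv A B \<circ> h i) y) \<le> sqrt (qform_contraction B) * qnorm A B (x - y)"
    using qnorm_Mmul_inv_le[of "h i x - h i y"] by (simp add: Mmul_inv_diff isometry[OF i])
qed (use assms qnorm_triangle qnorm_ge qform_contraction_bounds continuous_on_qnorm in
      \<open>auto simp: qnorm_def qform_def\<close>)

lemma Tset_attractor:
  "Tset A B \<noteq> {}" "compact (Tset A B)" "gmap A B ` Tset A B = (\<Union>\<delta>\<in>Dset B. \<delta> ` Tset A B)"
proof -
  define t :: pt where "t = ((of_int B - 1) / 2, 0)"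
  have gmap: "gmap A B z = Mmul A B z + t" for z by (simp add: gmap_def t_def)
  define h where "h \<delta> z = \<delta> z - t" for \<delta> :: "pt \<Rightarrow> pt" and z
  have invariance_iff: "gmap A B ` S = (\<Union>\<delta>\<in>Dset B. \<delta> ` S) \<longleftrightarrow> S = (\<Union>\<delta>\<in>Dset B. (Mmul_inv A B \<circ> h \<delta>) ` S)" for S
    by (subst image_eq_iff_eq_image_inverse[where g="\<lambda>z. Mmul_inv A B (z - t)"])
       (simp_all add: gmap Mmul_Mmul_inv Mmul_inv_Mmul image_UN image_image h_def)
  have "contracting_ifs (qnorm A B) (1/2) (Dset B) (\<lambda>\<delta>. Mmul_inv A B \<circ> h \<delta>) (sqrt (qform_contraction B))"
  proof (rule contracting_ifs_Mmul_inv)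
    fix \<delta> x y assume "\<delta> \<in> Dset B"
    hence "h \<delta> x - h \<delta> y = x - y \<or> h \<delta> x - h \<delta> y = - (x - y)"
      using B_ge by (auto simp: Dset_eq h_def xshift_diff)
    thus "qnorm A B (h \<delta> x - h \<delta> y) = qnorm A B (x - y)" using qnorm_uminus by metis
  qed (use B_ge in \<open>auto simp: Dset_eq h_def xshift_def intro!: continuous_intros\<close>)
  from contracting_ifs.attractor_ex1[OF this]
  have "\<exists>!S. S \<noteq> {} \<and> compact S \<and> gmap A B ` S = (\<Union>\<delta>\<in>Dset B. \<delta> ` S)"
    by (simp only: invariance_iff[symmetric])
  hence "Tset A B \<noteq> {} \<and> compact (Tset A B) \<and> gmap A B ` Tset A B = (\<Union>\<delta>\<in>Dset B. \<delta> ` Tset A B)"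
    unfolding Tset_def by (rule theI')
  thus "Tset A B \<noteq> {}" "compact (Tset A B)" "gmap A B ` Tset A B = (\<Union>\<delta>\<in>Dset B. \<delta> ` Tset A B)"
    by blast+
qed

lemma Tl_eqI:
  assumes "W \<noteq> {}" "compact W" "Mmul A B ` W = (\<Union>k\<in>{0..B-1}. xshift k ` W)"
  shows "Tl A B = W"
proof -
  have invariance_iff: "Mmul A B ` S = (\<Union>k\<in>{0..B-1}. xshift k ` S) \<longleftrightarrow> S = (\<Union>k\<in>{0..B-1}. (Mmul_inv A B \<circ> xshift k) ` S)" for S
    by (subst image_eq_iff_eq_image_inverse[where g="Mmul_inv A B"])
       (simp_all add: Mmul_Mmul_inv Mmul_inv_Mmul image_UN image_comp)
  have "contracting_ifs (qnorm A B) (1/2) {0..B-1} (\<lambda>k. Mmul_inv A B \<circ> xshift k) (sqrt (qform_contraction B))"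
    using B_ge by (intro contracting_ifs_Mmul_inv) (auto simp: xshift_def intro!: continuous_intros)
  from contracting_ifs.attractor_ex1[OF this]
  have "\<exists>!S. S \<noteq> {} \<and> compact S \<and> Mmul A B ` S = (\<Union>k\<in>{0..B-1}. xshift k ` S)"
    by (simp only: invariance_iff[symmetric])
  thus ?thesis
    unfolding Tl_def xshift_def[abs_def]
    by (rule the1_equality) (use assms in \<open>simp add: xshift_def[abs_def]\<close>)
qed

lemma Tl_eq_symmetrization:
  "Tl A B = (\<lambda>z. z - gmap_fixpoint A B) ` (Tset A B \<union> uminus ` Tset A B)"
proof (rule Tl_eqI)
  let ?T = "Tset A B" and ?p = "gmap_fixpoint A B"
  let ?U = "?T \<union> uminus ` ?T"
  show "(\<lambda>z. z - ?p) ` ?U \<noteq> {}" using Tset_attractor(1) by simp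
  have "compact ?U" using Tset_attractor(2) by (intro compact_Un compact_negations)
  thus "compact ((\<lambda>z. z - ?p) ` ?U)" by (intro compact_continuous_image continuous_intros)
  have "gmap A B ` ?T = (\<Union>k\<in>{0..B-2}. xshift k ` ?T) \<union> uminus ` ?T"
    using Tset_attractor(3) B_ge by (simp add: Dset_eq sup_commute)
  hence gmap_U: "gmap A B ` ?U = (\<Union>k\<in>{0..B-1}. xshift k ` ?U)"
    by (rule gmap_image_symmetrization[OF B_ge])
  have "1 + A + B \<noteq> 0" using A_ge B_ge by simp
  hence "Mmul A B ` (\<lambda>z. z - ?p) ` ?U = (\<lambda>z. z - ?p) ` gmap A B ` ?U"
    by (simp add: image_image Mmul_diff_gmap_fixpoint)
  also have "\<dots> = (\<lambda>z. z - ?p) ` (\<Union>k\<in>{0..B-1}. xshift k ` ?U)" by (simp only: gmap_U)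
  also have "\<dots> = (\<Union>k\<in>{0..B-1}. xshift k ` (\<lambda>z. z - ?p) ` ?U)"
    by (simp add: image_UN image_image xshift_def algebra_simps)
  finally show "Mmul A B ` (\<lambda>z. z - ?p) ` ?U = (\<Union>k\<in>{0..B-1}. xshift k ` (\<lambda>z. z - ?p) ` ?U)" .
qed

lemma gam_in_nbr_l:
  assumes "x \<in> Tset A B \<union> uminus ` Tset A B" "y \<in> Tset A B \<union> uminus ` Tset A B"
    and "x = gam p q 0 y" and "gam p q 0 \<noteq> id"
  shows "gam p q 0 \<in> nbr_l A B"
proof -
  let ?p = "gmap_fixpoint A B"
  have "x - ?p \<in> Tl A B" "y - ?p \<in> Tl A B" using assms(1,2) by (auto simp: Tl_eq_symmetrization)
  moreover have "x - ?p = gam p q 0 (y - ?p)" using assms(3) by (simp add: gam_0_apply algebra_simps)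
  ultimately have "Tl A B \<inter> gam p q 0 ` Tl A B \<noteq> {}" by blast
  thus ?thesis unfolding nbr_l_def using assms(4) by blast
qed

end

theorem lemma3p2:
  fixes A B :: int
  assumes "-1 \<le> A" and "A \<le> B" and "B \<ge> 2" and "2 * A < B + 3"
  shows "nbr A B \<subseteq> nbr_l A B \<union> {cmap} \<union> {s \<circ> cmap | s. s \<in> nbr_l A B}"
proof
  fix g assume "g \<in> nbr A B"
  then obtain x y where g: "g \<in> Gamma" "g \<noteq> id" and xy: "x \<in> Tset A B" "y \<in> Tset A B" "x = g y"
    unfolding nbr_def by blast
  obtain p q where "g = gam p q 0 \<or> g = gam p q 0 \<circ> cmap" using Gamma_cases[OF g(1)] by blast
  thus "g \<in> nbr_l A B \<union> {cmap} \<union> {s \<circ> cmap | s. s \<in> nbr_l A B}"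
  proof
    assume "g = gam p q 0"
    thus ?thesis using gam_in_nbr_l[OF assms(1-3), of x y p q] xy g(2) by blast
  next
    assume g_c: "g = gam p q 0 \<circ> cmap"
    show ?thesis
    proof (cases "gam p q 0 = id")
      case True thus ?thesis using g_c by simp
    next
      case False
      have "x = gam p q 0 (- y)" using xy(3) g_c by (simp add: cmap_eq_uminus)
      hence "gam p q 0 \<in> nbr_l A B" using gam_in_nbr_l[OF assms(1-3), of x "- y" p q] xy False by blast
      thus ?thesis using g_c by blast
    qed
  qed
qed

end
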